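(* There exists a constant $C>0$, depending only on $d,\kappa,\alpha,\chi$, such that for every $\delta>0$ and every $\xi\in\mathbb{R}^d$, $$\big|\omega_\delta(\xi)-\gamma|\xi|\big|\le C\delta|\xi|^2 .$$
   Context: Fix $d\ge1$, $\kappa\in(0,\infty)$, $\alpha\in(0,1)$, and $\chi\in L^\infty(\mathbb{R})$ with $\operatorname{supp}\chi\subset[-1,1]$, $0\le\chi\le1$, $\chi\equiv1$ on $[-\tfrac12,\tfrac12]$; $\chi_\delta(y)=\chi(|y|/\delta)$. $\omega_\delta(\xi)=\big(\frac{\kappa}{\delta^{2(1-\alpha)}}\int_{\mathbb{R}^d}\chi_\delta(y)\frac{1-\cos(y\cdot\xi)}{|y|^{d+2\alpha}}dy\big)^{1/2}$ and $\gamma=\big(\frac{\kappa}{2}\mathcal L^d(B_1)\int_0^1\chi(\rho)\rho^{1-2\alpha}d\rho\big)^{1/2}$, with $\mathcal L^d(B_1)$ the volume of the unit ball. *)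

theory Defs
  imports "HOL-Analysis.Analysis"
begin

definition omega_delta ::
  "real \<Rightarrow> real \<Rightarrow> (real \<Rightarrow> real) \<Rightarrow> real \<Rightarrow> 'a::euclidean_space \<Rightarrow> real" where
  "omega_delta \<kappa> \<alpha> chi \<delta> \<xi> =
     sqrt (\<kappa> / \<delta> powr (2 * (1 - \<alpha>)) *
       (LINT y|lborel. chi (norm y / \<delta>) * (1 - cos (y \<bullet> \<xi>))
                        / norm y powr (real DIM('a) + 2 * \<alpha>)))"

definition gamma_const ::
  "'a::euclidean_space itself \<Rightarrow> real \<Rightarrow> real \<Rightarrow> (real \<Rightarrow> real) \<Rightarrow> real" where
  "gamma_const _ \<kappa> \<alpha> chi =
     sqrt (\<kappa> / 2 * measure lborel (ball (0::'a) 1) *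
       (LBINT \<rho>=0..1. chi \<rho> * \<rho> powr (1 - 2 * \<alpha>)))"

end

theory Submission
  imports Defs
begin

text \<open>\<open>\<omega>\<^sub>\<delta>(\<xi>)\<^sup>2\<close> integrates \<open>1 - cos (y \<bullet> \<xi>)\<close> against a nonnegative radial kernel supported in
  the ball of radius \<open>\<delta>\<close>. There Taylor's formula squeezes \<open>1 - cos (y \<bullet> \<xi>)\<close> between
  \<open>(y \<bullet> \<xi>)\<^sup>2/2 \<cdot> (1 - \<delta>\<^sup>2|\<xi>|\<^sup>2/12)\<close> and \<open>(y \<bullet> \<xi>)\<^sup>2/2\<close>, and the quadratic term integrates to
  exactly \<open>\<gamma>\<^sup>2|\<xi>|\<^sup>2\<close>: isotropy of radial weights reduces it to the second moment of the
  kernel, which polar coordinates and the dilation \<open>r = \<delta>\<rho>\<close> evaluate as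
  \<open>d |B\<^sub>1| \<delta>\<^bsup>2(1-\<alpha>)\<^esup> \<integral>\<^sub>0\<^sup>1 \<chi>(\<rho>) \<rho>\<^bsup>1-2\<alpha>\<^esup> d\<rho>\<close>. Hence \<open>\<omega>\<^sub>\<delta>(\<xi>)\<^sup>2 = \<gamma>\<^sup>2|\<xi>|\<^sup>2 (1 - O(\<delta>\<^sup>2|\<xi>|\<^sup>2))\<close>, and
  taking square roots gives the claim.\<close>

lemma one_minus_cos_le: "1 - cos (x::real) \<le> x\<^sup>2 / 2"
proof -
  obtain t where "cos x = (\<Sum>m<2. cos_coeff m * x ^ m) + cos (t + 1/2 * real 2 * pi) / fact 2 * x ^ 2"
    using Maclaurin_cos_expansion[of x 2] by blast
  then have "cos x = 1 - cos t * x\<^sup>2 / 2"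
    by (simp add: cos_coeff_def lessThan_nat_numeral fact_numeral)
  moreover have "cos t * x\<^sup>2 \<le> x\<^sup>2"
    using mult_right_mono[OF cos_le_one, of "x\<^sup>2" t] by simp
  ultimately show ?thesis by simp
qed

lemma one_minus_cos_ge: "x\<^sup>2 / 2 - x ^ 4 / 24 \<le> 1 - cos (x::real)"
proof -
  obtain t where "cos x = (\<Sum>m<4. cos_coeff m * x ^ m) + cos (t + 1/2 * real 4 * pi) / fact 4 * x ^ 4"
    using Maclaurin_cos_expansion[of x 4] by blast
  moreover have "cos (t + 1/2 * real 4 * pi) = cos t"
    using cos_periodic[of t] by simp
  ultimately have "cos x = 1 - x\<^sup>2 / 2 + cos t * x ^ 4 / 24"
    by (simp add: cos_coeff_def lessThan_nat_numeral fact_numeral power2_eq_square)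
  moreover have "cos t * x ^ 4 \<le> x ^ 4"
    using mult_right_mono[OF cos_le_one, of "x ^ 4" t] by simp
  ultimately show ?thesis by simp
qed

lemma abs_sub_le_of_square_gap:
  fixes a b e :: real
  assumes "0 \<le> b" "b\<^sup>2 \<le> a\<^sup>2" "a\<^sup>2 - b\<^sup>2 \<le> e\<^sup>2" "0 \<le> a" "0 \<le> e"
  shows "\<bar>b - a\<bar> \<le> e"
proof -
  have "b \<le> a" using power2_le_imp_le assms(2,4) .
  then have "(a - b)\<^sup>2 \<le> (a - b) * (a + b)"
    using assms(1) by (simp add: power2_eq_square mult_left_mono)
  also have "\<dots> = a\<^sup>2 - b\<^sup>2" by (simp add: power2_eq_square algebra_simps)
  finally have "(a - b)\<^sup>2 \<le> e\<^sup>2" using assms(3) by linarith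
  then have "a - b \<le> e" using assms(5) by (rule power2_le_imp_le)
  with \<open>b \<le> a\<close> show ?thesis by simp
qed

lemma abs_sqrt_sub_sqrt_le:
  fixes A Q c t :: real
  assumes "0 \<le> c" "0 \<le> t" "0 \<le> A" "(1/2 - t) * Q \<le> A" "A \<le> Q / 2"
  shows "\<bar>sqrt (c * A) - sqrt (c * Q / 2)\<bar> \<le> sqrt (c * Q / 2) * sqrt (2 * t)"
proof (rule abs_sub_le_of_square_gap)
  have "(sqrt (c * Q / 2))\<^sup>2 - (sqrt (c * A))\<^sup>2 = c * (Q / 2 - A)"
    using assms by (simp add: algebra_simps)
  also have "\<dots> \<le> c * (t * Q)"
    using assms by (intro mult_left_mono) (auto simp: algebra_simps)
  also have "\<dots> = (sqrt (c * Q / 2) * sqrt (2 * t))\<^sup>2"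
    using assms by (simp add: power_mult_distrib)
  finally show "(sqrt (c * Q / 2))\<^sup>2 - (sqrt (c * A))\<^sup>2 \<le> (sqrt (c * Q / 2) * sqrt (2 * t))\<^sup>2" .
  show "(sqrt (c * A))\<^sup>2 \<le> (sqrt (c * Q / 2))\<^sup>2"
    using assms mult_left_mono[of "2 * A" Q c] by simp
qed (use assms in auto)

definition radial_density :: "'a::euclidean_space itself \<Rightarrow> real \<Rightarrow> ennreal" where
  "radial_density _ r =
     ennreal (real DIM('a) * measure lborel (ball (0::'a) 1) * r powr (real DIM('a) - 1)) * indicator {0..} r"

lemma radial_density_measurable [measurable]:
  "radial_density TYPE('a::euclidean_space) \<in> borel_measurable borel"
  unfolding radial_density_def by measurable

lemma emeasure_radial_density_atMost:
  "emeasure (density lborel (radial_density TYPE('a::euclidean_space))) {..a} =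
     ennreal (if a < 0 then 0 else a ^ DIM('a) * measure lborel (ball (0::'a) 1))"
proof -
  let ?d = "real DIM('a)" and ?V = "measure lborel (ball (0::'a) 1)"
  have "emeasure (density lborel (radial_density TYPE('a))) {..a} =
      (\<integral>\<^sup>+ r. ennreal (?d * ?V * r powr (?d - 1)) * indicator {0..a} r \<partial>lborel)"
    by (subst emeasure_density)
       (auto intro!: nn_integral_cong simp: radial_density_def split: split_indicator)
  also have "\<dots> = ennreal (if a < 0 then 0 else a ^ DIM('a) * ?V)"
  proof (cases "a < 0")
    case False
    have "((\<lambda>r. ?d * ?V * r powr (?d - 1)) has_integral ?d * ?V * (a powr (?d - 1 + 1) / (?d - 1 + 1))) {0..a}"
      using False by (intro has_integral_mult_right has_integral_powr_from_0) auto
    then have "(\<integral>\<^sup>+ r. ennreal (?d * ?V * r powr (?d - 1)) * indicator {0..a} r \<partial>lborel)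
        = ennreal (?d * ?V * (a powr (?d - 1 + 1) / (?d - 1 + 1)))"
      by (intro nn_integral_has_integral_lebesgue') auto
    with False show ?thesis by (simp add: powr_realpow')
  qed simp
  finally show ?thesis .
qed

text \<open>Polar coordinates: both measures give mass \<open>|B\<^sub>1| a\<^sup>d\<close> to every half-line \<open>(-\<infinity>, a]\<close>.\<close>

lemma distr_norm_lborel:
  "distr (lborel::'a::euclidean_space measure) borel norm = density lborel (radial_density TYPE('a))"
proof (rule measure_eqI_generator_eq[where E="range atMost" and \<Omega>=UNIV and A="\<lambda>i. {..real i}"])
  have sets_borel: "sets (borel::real measure) = sigma_sets UNIV (range atMost)"
    by (subst borel_eq_atMost) (simp add: sets_measure_of)
  then show "sets (distr (lborel::'a measure) borel norm) = sigma_sets UNIV (range atMost)"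
    and "sets (density lborel (radial_density TYPE('a))) = sigma_sets UNIV (range atMost)"
    by simp_all
  show "Int_stable (range (atMost :: real \<Rightarrow> real set))"
    by (auto simp: Int_stable_def)
  show "range atMost \<subseteq> Pow (UNIV::real set)" "range (\<lambda>i::nat. {..real i}) \<subseteq> range atMost"
    by auto
  show "(\<Union>i::nat. {..real i}) = UNIV"
    by (auto intro: real_arch_simple)
  have distr_atMost: "emeasure (distr (lborel::'a measure) borel norm) {..a} =
      ennreal (if a < 0 then 0 else a ^ DIM('a) * measure lborel (ball (0::'a) 1))" for a
  proof -
    have "norm -` {..a} \<inter> space lborel = cball (0::'a) a"
      by (auto simp: mem_cball)
    moreover have "emeasure lborel (cball (0::'a) a) = ennreal (measure lborel (cball (0::'a) a))"
      using emeasure_lborel_cball_finite[of "0::'a" a] by (subst emeasure_eq_ennreal_measure) auto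
    moreover have "a \<ge> 0 \<Longrightarrow> measure lborel (cball (0::'a) a) = a ^ DIM('a) * measure lborel (ball (0::'a) 1)"
      using content_ball_conv_unit_ball[of a "0::'a"] by (simp only: content_cball_conv_ball)
    ultimately show ?thesis
      by (subst emeasure_distr) auto
  qed
  then show "emeasure (distr (lborel::'a measure) borel norm) {..real i} \<noteq> \<infinity>" for i
    by simp
  show "emeasure (distr (lborel::'a measure) borel norm) X = emeasure (density lborel (radial_density TYPE('a))) X"
    if "X \<in> range atMost" for X
    using that distr_atMost emeasure_radial_density_atMost[where 'a='a] by auto
qed

lemma nn_integral_radial:
  assumes [measurable]: "g \<in> borel_measurable borel"
  shows "(\<integral>\<^sup>+ y. g (norm y) \<partial>(lborel::'a::euclidean_space measure)) =
         (\<integral>\<^sup>+ r. g r * radial_density TYPE('a) r \<partial>lborel)"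
proof -
  have "(\<integral>\<^sup>+ y. g (norm y) \<partial>(lborel::'a measure)) = (\<integral>\<^sup>+ r. g r \<partial>distr (lborel::'a measure) borel norm)"
    by (subst nn_integral_distr) auto
  also have "\<dots> = (\<integral>\<^sup>+ r. radial_density TYPE('a) r * g r \<partial>lborel)"
    unfolding distr_norm_lborel by (subst nn_integral_density) auto
  finally show ?thesis by (simp add: mult.commute)
qed

lemma nn_integral_radial_powr:
  fixes g :: "real \<Rightarrow> real"
  assumes [measurable]: "g \<in> borel_measurable borel" and g_nonneg: "\<And>r. 0 \<le> g r"
  shows "(\<integral>\<^sup>+ y. ennreal (g (norm y) * norm y powr p) \<partial>(lborel::'a::euclidean_space measure)) =
    ennreal (real DIM('a) * measure lborel (ball (0::'a) 1)) *
      (\<integral>\<^sup>+ r. ennreal (g r * r powr (p + real DIM('a) - 1)) * indicator {0..} r \<partial>lborel)"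
proof -
  define c where "c = real DIM('a) * measure lborel (ball (0::'a) 1)"
  have "ennreal (g r * r powr p) * radial_density TYPE('a) r =
      ennreal c * (ennreal (g r * r powr (p + real DIM('a) - 1)) * indicator {0..} r)" for r
  proof (cases "r > 0")
    case True
    then have "g r * r powr p * (c * r powr (real DIM('a) - 1)) = c * (g r * r powr (p + real DIM('a) - 1))"
      by (simp add: powr_add[symmetric] mult_ac add_diff_eq)
    with True g_nonneg[of r] show ?thesis
      by (simp add: radial_density_def c_def ennreal_mult'[symmetric] mult_ac)
  qed (auto simp: radial_density_def indicator_def)
  then have "(\<integral>\<^sup>+ y. ennreal (g (norm y) * norm y powr p) \<partial>(lborel::'a measure)) =
      (\<integral>\<^sup>+ r. ennreal c * (ennreal (g r * r powr (p + real DIM('a) - 1)) * indicator {0..} r) \<partial>lborel)"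
    by (subst nn_integral_radial) auto
  then show ?thesis
    by (simp add: nn_integral_cmult c_def)
qed

lemma nn_integral_dilate_powr:
  fixes g :: "real \<Rightarrow> real"
  assumes [measurable]: "g \<in> borel_measurable borel" and g_nonneg: "\<And>r. 0 \<le> g r" and "0 < \<delta>"
  shows "(\<integral>\<^sup>+ r. ennreal (g (r / \<delta>) * r powr q) * indicator {0..} r \<partial>lborel) =
    ennreal (\<delta> powr (q + 1)) * (\<integral>\<^sup>+ \<rho>. ennreal (g \<rho> * \<rho> powr q) * indicator {0..} \<rho> \<partial>lborel)"
proof -
  have "ennreal (g (\<delta> * \<rho> / \<delta>) * (\<delta> * \<rho>) powr q) * indicator {0..} (\<delta> * \<rho>) =
      ennreal (\<delta> powr q) * (ennreal (g \<rho> * \<rho> powr q) * indicator {0..} \<rho>)" for \<rho>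
    using \<open>0 < \<delta>\<close> g_nonneg[of \<rho>]
    by (auto simp: indicator_def powr_mult ennreal_mult'[symmetric] mult_ac zero_le_mult_iff)
  then have "(\<integral>\<^sup>+ r. ennreal (g (r / \<delta>) * r powr q) * indicator {0..} r \<partial>lborel) =
      ennreal \<delta> * (\<integral>\<^sup>+ \<rho>. ennreal (\<delta> powr q) * (ennreal (g \<rho> * \<rho> powr q) * indicator {0..} \<rho>) \<partial>lborel)"
    using \<open>0 < \<delta>\<close> by (subst nn_integral_real_affine[where c=\<delta> and t=0]) auto
  also have "\<dots> = ennreal (\<delta> * \<delta> powr q) * (\<integral>\<^sup>+ \<rho>. ennreal (g \<rho> * \<rho> powr q) * indicator {0..} \<rho> \<partial>lborel)"
    using \<open>0 < \<delta>\<close> by (simp add: nn_integral_cmult ennreal_mult mult.assoc)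
  also have "\<delta> * \<delta> powr q = \<delta> powr (q + 1)"
    using \<open>0 < \<delta>\<close> by (simp add: powr_add)
  finally show ?thesis .
qed

definition permute_Basis :: "('a \<Rightarrow> 'a) \<Rightarrow> 'a \<Rightarrow> 'a::euclidean_space" where
  "permute_Basis \<pi> x = (\<Sum>c\<in>Basis. (x \<bullet> \<pi> c) *\<^sub>R c)"

definition reflect_Basis :: "'a \<Rightarrow> 'a \<Rightarrow> 'a::euclidean_space" where
  "reflect_Basis b x = (\<Sum>c\<in>Basis. ((if c = b then -1 else 1) * (x \<bullet> c)) *\<^sub>R c)"

lemma inner_permute_Basis: "c \<in> Basis \<Longrightarrow> permute_Basis \<pi> x \<bullet> c = x \<bullet> \<pi> c"
  unfolding permute_Basis_def by (simp add: inner_sum_left inner_Basis if_distrib cong: if_cong)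

lemma inner_reflect_Basis:
  "c \<in> Basis \<Longrightarrow> reflect_Basis b x \<bullet> c = (if c = b then -1 else 1) * (x \<bullet> c)"
  unfolding reflect_Basis_def by (simp add: inner_sum_left inner_Basis if_distrib cong: if_cong)

lemma permute_Basis_measurable [measurable]: "permute_Basis \<pi> \<in> borel_measurable borel"
  unfolding permute_Basis_def by measurable

lemma reflect_Basis_measurable [measurable]: "reflect_Basis b \<in> borel_measurable borel"
  unfolding reflect_Basis_def by measurable

lemma norm_permute_Basis:
  assumes "bij_betw \<pi> Basis Basis"
  shows "norm (permute_Basis \<pi> x) = norm (x::'a::euclidean_space)"
proof -
  have "permute_Basis \<pi> x \<bullet> permute_Basis \<pi> x = (\<Sum>b\<in>Basis. (x \<bullet> \<pi> b) * (x \<bullet> \<pi> b))"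
    by (subst euclidean_inner) (simp add: inner_permute_Basis)
  also have "\<dots> = x \<bullet> x"
    using sum.reindex_bij_betw[OF assms, of "\<lambda>b. (x \<bullet> b) * (x \<bullet> b)"] by (simp add: euclidean_inner[of x x])
  finally show ?thesis by (simp add: norm_eq_sqrt_inner)
qed

lemma norm_reflect_Basis: "norm (reflect_Basis b x) = norm (x::'a::euclidean_space)"
proof -
  have "reflect_Basis b x \<bullet> reflect_Basis b x = (\<Sum>c\<in>Basis. (x \<bullet> c) * (x \<bullet> c))"
    by (subst euclidean_inner) (auto simp: inner_reflect_Basis intro!: sum.cong)
  also have "\<dots> = x \<bullet> x"
    by (simp add: euclidean_inner[of x x])
  finally show ?thesis by (simp add: norm_eq_sqrt_inner)
qed

lemma distr_lborel_permute_Basis: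
  assumes \<pi>: "\<And>c. c \<in> Basis \<Longrightarrow> \<pi> c \<in> Basis \<and> \<pi> (\<pi> c) = c"
  shows "distr lborel borel (permute_Basis \<pi>) = (lborel :: 'a::euclidean_space measure)"
proof (rule lborel_eqI[symmetric])
  fix l u :: 'a assume le: "\<And>b. b \<in> Basis \<Longrightarrow> l \<bullet> b \<le> u \<bullet> b"
  have bij: "bij_betw \<pi> Basis (Basis::'a set)"
    by (rule bij_betwI[where g=\<pi>]) (use \<pi> in auto)
  have "permute_Basis \<pi> -` box l u = box (permute_Basis \<pi> l) (permute_Basis \<pi> u)"
  proof (intro set_eqI)
    fix x :: 'a
    have "(\<forall>c\<in>Basis. l \<bullet> c < x \<bullet> \<pi> c \<and> x \<bullet> \<pi> c < u \<bullet> c) \<longleftrightarrow>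
        (\<forall>c\<in>Basis. l \<bullet> \<pi> c < x \<bullet> c \<and> x \<bullet> c < u \<bullet> \<pi> c)"
    proof safe
      fix c :: 'a
      assume "\<forall>c\<in>Basis. l \<bullet> c < x \<bullet> \<pi> c \<and> x \<bullet> \<pi> c < u \<bullet> c" "c \<in> Basis"
      then show "l \<bullet> \<pi> c < x \<bullet> c" "x \<bullet> c < u \<bullet> \<pi> c"
        using \<pi>[of c] by force+
    next
      fix c :: 'a
      assume "\<forall>c\<in>Basis. l \<bullet> \<pi> c < x \<bullet> c \<and> x \<bullet> c < u \<bullet> \<pi> c" "c \<in> Basis"
      then show "l \<bullet> c < x \<bullet> \<pi> c" "x \<bullet> \<pi> c < u \<bullet> c"
        using \<pi>[of c] by force+
    qed
    then show "x \<in> permute_Basis \<pi> -` box l u \<longleftrightarrow> x \<in> box (permute_Basis \<pi> l) (permute_Basis \<pi> u)"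
      by (simp add: mem_box inner_permute_Basis)
  qed
  then have "emeasure (distr lborel borel (permute_Basis \<pi>)) (box l u) =
      emeasure lborel (box (permute_Basis \<pi> l) (permute_Basis \<pi> u))"
    by (subst emeasure_distr) auto
  also have "\<dots> = (\<Prod>b\<in>Basis. (u - l) \<bullet> \<pi> b)"
    using le \<pi> by (simp add: emeasure_lborel_box_eq inner_permute_Basis inner_diff_left)
  also have "\<dots> = (\<Prod>b\<in>Basis. (u - l) \<bullet> b)"
    using prod.reindex_bij_betw[OF bij, of "\<lambda>b. (u - l) \<bullet> b"] by simp
  finally show "emeasure (distr lborel borel (permute_Basis \<pi>)) (box l u) = (\<Prod>b\<in>Basis. (u - l) \<bullet> b)" .
qed simp

lemma distr_lborel_reflect_Basis:
  "distr lborel borel (reflect_Basis b) = (lborel :: 'a::euclidean_space measure)"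
proof -
  have "lborel = density (distr lborel borel (\<lambda>x::'a. 0 + (\<Sum>c\<in>Basis. ((if c = b then -1 else 1) * (x \<bullet> c)) *\<^sub>R c)))
      (\<lambda>_. (\<Prod>c\<in>Basis. \<bar>if c = b then -1 else 1::real\<bar>))"
    by (rule lborel_affine_euclidean) auto
  then show ?thesis
    by (simp add: reflect_Basis_def[abs_def] if_distrib density_1 cong: if_cong)
qed

lemma integral_lborel_measure_preserving:
  fixes f :: "'a::euclidean_space \<Rightarrow> real"
  assumes "distr lborel borel T = lborel" "T \<in> borel_measurable borel" "f \<in> borel_measurable borel"
  shows "(\<integral>x. f (T x) \<partial>lborel) = (\<integral>x. f x \<partial>lborel)"
  using integral_distr[of T lborel borel f] assms by simp

context
  fixes F :: "real \<Rightarrow> real"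
  assumes F_measurable [measurable]: "F \<in> borel_measurable borel"
    and F_second_moment: "integrable lborel (\<lambda>y::'a::euclidean_space. F (norm y) * (norm y)\<^sup>2)"
begin

lemma integrable_radial_coord_product:
  fixes b c :: 'a
  assumes "b \<in> Basis" "c \<in> Basis"
  shows "integrable lborel (\<lambda>y::'a. F (norm y) * ((y \<bullet> b) * (y \<bullet> c)))"
proof (rule Bochner_Integration.integrable_bound[OF F_second_moment])
  have "\<bar>(y \<bullet> b) * (y \<bullet> c)\<bar> \<le> (norm y)\<^sup>2" for y :: 'a
    using assms Basis_le_norm[of b y] Basis_le_norm[of c y]
    by (simp add: abs_mult power2_eq_square mult_mono)
  then show "AE y in lborel. norm (F (norm y) * ((y \<bullet> b) * (y \<bullet> c))) \<le> norm (F (norm y) * (norm y)\<^sup>2)"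
    by (simp add: abs_mult mult_left_mono)
qed measurable

lemma integral_radial_coord_product:
  fixes b c b0 :: 'a
  assumes "b \<in> Basis" "c \<in> Basis" "b0 \<in> Basis"
  shows "(\<integral>y. F (norm y) * ((y \<bullet> b) * (y \<bullet> c)) \<partial>lborel) =
    (if b = c then \<integral>y. F (norm y) * (y \<bullet> b0)\<^sup>2 \<partial>lborel else 0)"
proof (cases "b = c")
  case True
  define \<pi> where "\<pi> x = (if x = b then b0 else if x = b0 then b else x)" for x :: 'a
  have \<pi>: "\<And>x. x \<in> Basis \<Longrightarrow> \<pi> x \<in> Basis \<and> \<pi> (\<pi> x) = x"
    using assms by (auto simp: \<pi>_def)
  have "(\<integral>y. F (norm y) * (y \<bullet> b0)\<^sup>2 \<partial>lborel) =
      (\<integral>y. F (norm (permute_Basis \<pi> y)) * (permute_Basis \<pi> y \<bullet> b0)\<^sup>2 \<partial>lborel)"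
    by (rule integral_lborel_measure_preserving[symmetric, OF distr_lborel_permute_Basis[OF \<pi>]]) auto
  also have "\<dots> = (\<integral>y. F (norm y) * ((y \<bullet> b) * (y \<bullet> c)) \<partial>lborel)"
    using assms True \<pi>
    by (intro Bochner_Integration.integral_cong)
       (auto simp: norm_permute_Basis bij_betwI[where g=\<pi>] inner_permute_Basis \<pi>_def power2_eq_square)
  finally show ?thesis using True by simp
next
  case False
  let ?I = "\<integral>y. F (norm y) * ((y \<bullet> b) * (y \<bullet> c)) \<partial>lborel"
  have "?I = (\<integral>y. F (norm (reflect_Basis b y)) * ((reflect_Basis b y \<bullet> b) * (reflect_Basis b y \<bullet> c)) \<partial>lborel)"
    by (rule integral_lborel_measure_preserving[symmetric, OF distr_lborel_reflect_Basis]) auto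
  also have "\<dots> = - ?I"
    using assms False by (simp add: norm_reflect_Basis inner_reflect_Basis)
  finally show ?thesis using False by simp
qed

text \<open>Isotropy: by the symmetries of the coordinate axes, the second moments of a radial
  weight form a multiple of the identity matrix.\<close>

lemma integral_radial_inner_product:
  fixes u v b0 :: 'a
  assumes "b0 \<in> Basis"
  shows "(\<integral>y. F (norm y) * ((y \<bullet> u) * (y \<bullet> v)) \<partial>lborel) = (u \<bullet> v) * (\<integral>y. F (norm y) * (y \<bullet> b0)\<^sup>2 \<partial>lborel)"
proof -
  define M where "M = (\<integral>y. F (norm y) * (y \<bullet> b0)\<^sup>2 \<partial>lborel)"
  have expand: "F (norm y) * ((y \<bullet> u) * (y \<bullet> v)) =
      (\<Sum>b\<in>Basis. \<Sum>c\<in>Basis. (u \<bullet> b) * (v \<bullet> c) * (F (norm y) * ((y \<bullet> b) * (y \<bullet> c))))" for y :: 'a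
  proof -
    have "(y \<bullet> u) * (y \<bullet> v) = (\<Sum>b\<in>Basis. (u \<bullet> b) * (y \<bullet> b)) * (\<Sum>c\<in>Basis. (v \<bullet> c) * (y \<bullet> c))"
      by (simp add: euclidean_inner[of y u] euclidean_inner[of y v] mult.commute)
    also have "\<dots> = (\<Sum>b\<in>Basis. \<Sum>c\<in>Basis. (u \<bullet> b) * (y \<bullet> b) * ((v \<bullet> c) * (y \<bullet> c)))"
      by (rule sum_product)
    finally show ?thesis
      by (simp add: sum_distrib_left mult_ac)
  qed
  have "(\<integral>y. F (norm y) * ((y \<bullet> u) * (y \<bullet> v)) \<partial>lborel) =
      (\<Sum>b\<in>Basis. \<Sum>c\<in>Basis. (u \<bullet> b) * (v \<bullet> c) * (\<integral>y. F (norm y) * ((y \<bullet> b) * (y \<bullet> c)) \<partial>lborel))"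
    unfolding expand
    by (simp add: integrable_radial_coord_product integrable_sum Bochner_Integration.integral_sum)
  also have "\<dots> = (\<Sum>b\<in>Basis. (u \<bullet> b) * (v \<bullet> b) * M)"
  proof (rule sum.cong[OF refl])
    fix b :: 'a assume b: "b \<in> Basis"
    have "(\<Sum>c\<in>Basis. (u \<bullet> b) * (v \<bullet> c) * (\<integral>y. F (norm y) * ((y \<bullet> b) * (y \<bullet> c)) \<partial>lborel)) =
        (\<Sum>c\<in>Basis. if c = b then (u \<bullet> b) * (v \<bullet> b) * M else 0)"
      by (intro sum.cong refl) (simp add: integral_radial_coord_product[OF b _ assms] M_def)
    with b show "(\<Sum>c\<in>Basis. (u \<bullet> b) * (v \<bullet> c) * (\<integral>y. F (norm y) * ((y \<bullet> b) * (y \<bullet> c)) \<partial>lborel)) =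
        (u \<bullet> b) * (v \<bullet> b) * M"
      by simp
  qed
  also have "\<dots> = (u \<bullet> v) * M"
    by (simp add: euclidean_inner[of u v] sum_distrib_right)
  finally show ?thesis unfolding M_def .
qed

lemma integrable_radial_inner_square:
  fixes \<xi> :: 'a
  shows "integrable lborel (\<lambda>y. F (norm y) * (y \<bullet> \<xi>)\<^sup>2)"
proof (rule Bochner_Integration.integrable_bound[OF integrable_mult_right[OF F_second_moment, of "(norm \<xi>)\<^sup>2"]])
  have "(y \<bullet> \<xi>)\<^sup>2 \<le> (norm \<xi>)\<^sup>2 * (norm y)\<^sup>2" for y :: 'a
    using Cauchy_Schwarz_ineq[of y \<xi>] by (simp add: power2_norm_eq_inner mult.commute)
  then show "AE y in lborel. norm (F (norm y) * (y \<bullet> \<xi>)\<^sup>2) \<le> norm ((norm \<xi>)\<^sup>2 * (F (norm y) * (norm y)\<^sup>2))"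
    by (simp add: abs_mult mult_left_mono mult.left_commute)
qed measurable

lemma integral_radial_inner_square:
  fixes \<xi> :: 'a
  shows "(\<integral>y. F (norm y) * (y \<bullet> \<xi>)\<^sup>2 \<partial>lborel) =
    (norm \<xi>)\<^sup>2 / real DIM('a) * (\<integral>y. F (norm (y::'a)) * (norm y)\<^sup>2 \<partial>lborel)"
proof -
  obtain b0 :: 'a where b0: "b0 \<in> Basis" using nonempty_Basis by blast
  define M where "M = (\<integral>y. F (norm y) * (y \<bullet> b0)\<^sup>2 \<partial>lborel)"
  have expand: "F (norm y) * (norm y)\<^sup>2 = (\<Sum>b\<in>Basis. F (norm y) * ((y \<bullet> b) * (y \<bullet> b)))" for y :: 'a
    by (simp only: power2_norm_eq_inner euclidean_inner[of y y] sum_distrib_left)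
  have "(\<integral>y. F (norm (y::'a)) * (norm y)\<^sup>2 \<partial>lborel) =
      (\<integral>y. (\<Sum>b\<in>(Basis::'a set). F (norm y) * ((y \<bullet> b) * (y \<bullet> b))) \<partial>lborel)"
    by (simp only: expand)
  also have "\<dots> = (\<Sum>b\<in>(Basis::'a set). \<integral>y. F (norm y) * ((y \<bullet> b) * (y \<bullet> b)) \<partial>lborel)"
    by (intro Bochner_Integration.integral_sum integrable_radial_coord_product)
  also have "\<dots> = real DIM('a) * M"
    using b0 by (simp add: integral_radial_inner_product[OF b0] M_def)
  finally have "(\<integral>y. F (norm (y::'a)) * (norm y)\<^sup>2 \<partial>lborel) = real DIM('a) * M" .
  moreover have "(\<integral>y. F (norm y) * (y \<bullet> \<xi>)\<^sup>2 \<partial>lborel) = (\<xi> \<bullet> \<xi>) * M"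
    using integral_radial_inner_product[OF b0, of \<xi> \<xi>] by (simp add: M_def power2_eq_square)
  ultimately show ?thesis
    by (simp add: power2_norm_eq_inner)
qed

end

lemma integral_one_minus_cos_bounds:
  fixes w :: "'a::euclidean_space \<Rightarrow> real" and \<xi> :: 'a
  assumes [measurable]: "w \<in> borel_measurable borel"
    and w_nonneg: "\<And>y. 0 \<le> w y" and w_support: "\<And>y. \<delta> < norm y \<Longrightarrow> w y = 0"
    and quadratic_integrable: "integrable lborel (\<lambda>y. w y * (y \<bullet> \<xi>)\<^sup>2)"
  shows "(1/2 - \<delta>\<^sup>2 * (norm \<xi>)\<^sup>2 / 24) * (\<integral>y. w y * (y \<bullet> \<xi>)\<^sup>2 \<partial>lborel)
           \<le> (\<integral>y. w y * (1 - cos (y \<bullet> \<xi>)) \<partial>lborel)"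
    and "(\<integral>y. w y * (1 - cos (y \<bullet> \<xi>)) \<partial>lborel) \<le> (\<integral>y. w y * (y \<bullet> \<xi>)\<^sup>2 \<partial>lborel) / 2"
proof -
  have upper: "w y * (1 - cos (y \<bullet> \<xi>)) \<le> w y * (y \<bullet> \<xi>)\<^sup>2 / 2" for y
    using mult_left_mono[OF one_minus_cos_le w_nonneg] by simp
  have lower: "(1/2 - \<delta>\<^sup>2 * (norm \<xi>)\<^sup>2 / 24) * (w y * (y \<bullet> \<xi>)\<^sup>2) \<le> w y * (1 - cos (y \<bullet> \<xi>))" for y
  proof (cases "norm y \<le> \<delta>")
    case True
    have "\<bar>y \<bullet> \<xi>\<bar> \<le> \<delta> * norm \<xi>"
      using Cauchy_Schwarz_ineq2[of y \<xi>] True by (meson mult_right_mono norm_ge_zero order_trans)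
    then have "(y \<bullet> \<xi>)\<^sup>2 \<le> \<delta>\<^sup>2 * (norm \<xi>)\<^sup>2"
      by (metis abs_ge_zero power2_abs power_mono power_mult_distrib)
    then have "(y \<bullet> \<xi>)\<^sup>2 * (y \<bullet> \<xi>)\<^sup>2 \<le> (y \<bullet> \<xi>)\<^sup>2 * (\<delta>\<^sup>2 * (norm \<xi>)\<^sup>2)"
      by (rule mult_left_mono) simp
    then have "(y \<bullet> \<xi>) ^ 4 \<le> (y \<bullet> \<xi>)\<^sup>2 * (\<delta>\<^sup>2 * (norm \<xi>)\<^sup>2)"
      by (simp add: power4_eq_xxxx power2_eq_square mult.assoc)
    then have "(1/2 - \<delta>\<^sup>2 * (norm \<xi>)\<^sup>2 / 24) * (y \<bullet> \<xi>)\<^sup>2 \<le> 1 - cos (y \<bullet> \<xi>)"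
      using one_minus_cos_ge[of "y \<bullet> \<xi>"] by (simp add: algebra_simps)
    from mult_left_mono[OF this w_nonneg] show ?thesis
      by (simp add: mult_ac)
  qed (simp add: w_support)
  have "\<bar>w y * (1 - cos (y \<bullet> \<xi>))\<bar> \<le> \<bar>w y * (y \<bullet> \<xi>)\<^sup>2\<bar>" for y
  proof -
    have "0 \<le> w y * (1 - cos (y \<bullet> \<xi>))" using w_nonneg[of y] by simp
    with upper[of y] show ?thesis by simp
  qed
  then have integrable: "integrable lborel (\<lambda>y. w y * (1 - cos (y \<bullet> \<xi>)))"
    by (intro Bochner_Integration.integrable_bound[OF quadratic_integrable]) auto
  show "(\<integral>y. w y * (1 - cos (y \<bullet> \<xi>)) \<partial>lborel) \<le> (\<integral>y. w y * (y \<bullet> \<xi>)\<^sup>2 \<partial>lborel) / 2"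
    using integral_mono[OF integrable integrable_divide[OF quadratic_integrable] upper] by simp
  show "(1/2 - \<delta>\<^sup>2 * (norm \<xi>)\<^sup>2 / 24) * (\<integral>y. w y * (y \<bullet> \<xi>)\<^sup>2 \<partial>lborel)
      \<le> (\<integral>y. w y * (1 - cos (y \<bullet> \<xi>)) \<partial>lborel)"
    using integral_mono[OF integrable_mult_right[OF quadratic_integrable] integrable lower] by simp
qed

lemma cutoff_moment_nonneg:
  assumes "\<And>x. 0 \<le> chi x"
  shows "0 \<le> (LBINT \<rho>=0..1. chi \<rho> * \<rho> powr p)"
  using interval_integral_Icc[of 0 1 "\<lambda>\<rho>. chi \<rho> * \<rho> powr p"] assms
  by (simp add: zero_ereal_def one_ereal_def set_lebesgue_integral_def integral_nonneg_AE)

lemma nn_integral_cutoff_moment: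
  fixes chi :: "real \<Rightarrow> real"
  assumes [measurable]: "chi \<in> borel_measurable borel"
    and chi_nonneg: "\<And>x. 0 \<le> chi x" and chi_le_1: "\<And>x. chi x \<le> 1"
    and chi_support: "\<And>x. 1 < \<bar>x\<bar> \<Longrightarrow> chi x = 0" and "p > -1"
  shows "(\<integral>\<^sup>+ \<rho>. ennreal (chi \<rho> * \<rho> powr p) * indicator {0..} \<rho> \<partial>lborel) =
    ennreal (LBINT \<rho>=0..1. chi \<rho> * \<rho> powr p)"
proof -
  define f where "f \<rho> = chi \<rho> * \<rho> powr p * indicator {0..1} \<rho>" for \<rho>
  have f_nonneg: "0 \<le> f \<rho>" for \<rho>
    using chi_nonneg by (simp add: f_def)
  have f_measurable [measurable]: "f \<in> borel_measurable borel"
    unfolding f_def by measurable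
  have "(\<integral>\<^sup>+ \<rho>. ennreal (chi \<rho> * \<rho> powr p) * indicator {0..} \<rho> \<partial>lborel) = (\<integral>\<^sup>+ \<rho>. f \<rho> \<partial>lborel)"
    using chi_support by (intro nn_integral_cong) (auto simp: f_def split: split_indicator)
  also have "\<dots> = ennreal (integral\<^sup>L lborel f)"
  proof (rule nn_integral_eq_integral)
    have "(\<integral>\<^sup>+ \<rho>. f \<rho> \<partial>lborel) \<le> (\<integral>\<^sup>+ \<rho>. ennreal (\<rho> powr p) * indicator {0..1} \<rho> \<partial>lborel)"
      using chi_nonneg chi_le_1
      by (intro nn_integral_mono) (auto simp: f_def mult_left_le_one_le split: split_indicator)
    also have "\<dots> = ennreal (1 powr (p + 1) / (p + 1))"
      using \<open>p > -1\<close> by (intro nn_integral_has_integral_lebesgue' has_integral_powr_from_0) auto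
    finally show "integrable lborel f"
      using f_nonneg by (intro integrableI_nonneg) (auto simp: f_def top.not_eq_extremum le_less_trans)
  qed (simp add: f_nonneg)
  also have "integral\<^sup>L lborel f = (LBINT \<rho>=0..1. chi \<rho> * \<rho> powr p)"
    using interval_integral_Icc[of 0 1 "\<lambda>\<rho>. chi \<rho> * \<rho> powr p"]
    by (simp add: zero_ereal_def one_ereal_def set_lebesgue_integral_def f_def[abs_def] mult_ac)
  finally show ?thesis .
qed

lemma cutoff_kernel_second_moment:
  fixes chi :: "real \<Rightarrow> real"
  assumes chi_measurable [measurable]: "chi \<in> borel_measurable borel"
    and chi_nonneg: "\<And>x. 0 \<le> chi x" and chi_le_1: "\<And>x. chi x \<le> 1"
    and chi_support: "\<And>x. 1 < \<bar>x\<bar> \<Longrightarrow> chi x = 0" and "\<alpha> < 1" and "0 < \<delta>"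
  defines "F \<equiv> \<lambda>r. chi (r / \<delta>) / r powr (real DIM('a::euclidean_space) + 2 * \<alpha>)"
  shows "integrable lborel (\<lambda>y::'a. F (norm y) * (norm y)\<^sup>2)"
    and "(\<integral>y. F (norm (y::'a)) * (norm y)\<^sup>2 \<partial>lborel) =
      real DIM('a) * measure lborel (ball (0::'a) 1) * \<delta> powr (2 * (1 - \<alpha>)) *
        (LBINT \<rho>=0..1. chi \<rho> * \<rho> powr (1 - 2 * \<alpha>))"
proof -
  define \<beta> where "\<beta> = real DIM('a) + 2 * \<alpha>"
  define c where "c = real DIM('a) * measure lborel (ball (0::'a) 1) * \<delta> powr (2 * (1 - \<alpha>))"
  define J where "J = (LBINT \<rho>=0..1. chi \<rho> * \<rho> powr (1 - 2 * \<alpha>))"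
  have chi_dilated_measurable [measurable]: "(\<lambda>r. chi (r / \<delta>)) \<in> borel_measurable borel"
    by measurable
  have "F r * r\<^sup>2 = chi (r / \<delta>) * r powr (2 - \<beta>)" if "0 \<le> r" for r
  proof (cases "r = 0")
    case False
    with that have "r\<^sup>2 = r powr 2" by (simp add: powr_numeral)
    then have "r\<^sup>2 / r powr \<beta> = r powr (2 - \<beta>)" by (simp add: powr_diff)
    then show ?thesis by (simp add: F_def \<beta>_def times_divide_eq_right[symmetric])
  qed (simp add: F_def)
  then have "(\<integral>\<^sup>+ y. ennreal (F (norm y) * (norm y)\<^sup>2) \<partial>(lborel::'a measure)) =
      (\<integral>\<^sup>+ y. ennreal (chi (norm y / \<delta>) * norm y powr (2 - \<beta>)) \<partial>(lborel::'a measure))"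
    by (intro nn_integral_cong) simp
  also have "\<dots> = ennreal (real DIM('a) * measure lborel (ball (0::'a) 1)) *
      (\<integral>\<^sup>+ r. ennreal (chi (r / \<delta>) * r powr (2 - \<beta> + real DIM('a) - 1)) * indicator {0..} r \<partial>lborel)"
    using chi_nonneg by (intro nn_integral_radial_powr) auto
  also have "2 - \<beta> + real DIM('a) - 1 = 1 - 2 * \<alpha>"
    by (simp add: \<beta>_def)
  also have "(\<integral>\<^sup>+ r. ennreal (chi (r / \<delta>) * r powr (1 - 2 * \<alpha>)) * indicator {0..} r \<partial>lborel) =
      ennreal (\<delta> powr (2 * (1 - \<alpha>))) * ennreal J"
    using nn_integral_dilate_powr[of chi \<delta> "1 - 2 * \<alpha>", OF chi_measurable chi_nonneg \<open>0 < \<delta>\<close>]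
      nn_integral_cutoff_moment[of chi "1 - 2 * \<alpha>", OF chi_measurable chi_nonneg chi_le_1 chi_support]
      \<open>\<alpha> < 1\<close>
    by (simp add: J_def algebra_simps)
  finally have moment: "(\<integral>\<^sup>+ y. ennreal (F (norm y) * (norm y)\<^sup>2) \<partial>(lborel::'a measure)) = ennreal (c * J)"
    using chi_nonneg by (simp add: c_def ennreal_mult' mult.assoc)
  have F_nonneg: "0 \<le> F r" for r
    using chi_nonneg by (simp add: F_def)
  have [measurable]: "F \<in> borel_measurable borel"
    unfolding F_def by measurable
  show integrable: "integrable lborel (\<lambda>y::'a. F (norm y) * (norm y)\<^sup>2)"
    using F_nonneg by (intro integrableI_nonneg) (auto simp: moment)
  have "0 \<le> c * J"
    using chi_nonneg by (simp add: c_def J_def cutoff_moment_nonneg)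
  moreover have "0 \<le> (\<integral>y. F (norm (y::'a)) * (norm y)\<^sup>2 \<partial>lborel)"
    using F_nonneg by (simp add: integral_nonneg_AE)
  moreover have "ennreal (\<integral>y. F (norm (y::'a)) * (norm y)\<^sup>2 \<partial>lborel) = ennreal (c * J)"
    using nn_integral_eq_integral[OF integrable] F_nonneg moment by simp
  ultimately show "(\<integral>y. F (norm (y::'a)) * (norm y)\<^sup>2 \<partial>lborel) = c * J"
    by simp
qed

lemma gamma_const_nonneg:
  assumes "0 \<le> \<kappa>" "\<And>x. 0 \<le> chi x"
  shows "0 \<le> gamma_const TYPE('a::euclidean_space) \<kappa> \<alpha> chi"
  using assms by (simp add: gamma_const_def cutoff_moment_nonneg)

lemma omega_delta_estimate:
  fixes chi :: "real \<Rightarrow> real" and \<xi> :: "'a::euclidean_space"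
  assumes "0 \<le> \<kappa>" "\<alpha> < 1" and chi_measurable [measurable]: "chi \<in> borel_measurable borel"
    and chi_nonneg: "\<And>x. 0 \<le> chi x" and chi_le_1: "\<And>x. chi x \<le> 1"
    and chi_support: "\<And>x. 1 < \<bar>x\<bar> \<Longrightarrow> chi x = 0" and "0 < \<delta>"
  shows "\<bar>omega_delta \<kappa> \<alpha> chi \<delta> \<xi> - gamma_const TYPE('a) \<kappa> \<alpha> chi * norm \<xi>\<bar>
           \<le> gamma_const TYPE('a) \<kappa> \<alpha> chi * \<delta> * (norm \<xi>)\<^sup>2"
proof -
  define F where "F r = chi (r / \<delta>) / r powr (real DIM('a) + 2 * \<alpha>)" for r
  define V where "V = measure lborel (ball (0::'a) 1)"
  define J where "J = (LBINT \<rho>=0..1. chi \<rho> * \<rho> powr (1 - 2 * \<alpha>))"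
  define P where "P = \<delta> powr (2 * (1 - \<alpha>))"
  define Q where "Q = (\<integral>y. F (norm y) * (y \<bullet> \<xi>)\<^sup>2 \<partial>lborel)"
  define A where "A = (\<integral>y. F (norm y) * (1 - cos (y \<bullet> \<xi>)) \<partial>lborel)"
  define t where "t = \<delta>\<^sup>2 * (norm \<xi>)\<^sup>2 / 24"
  have F_measurable [measurable]: "F \<in> borel_measurable borel"
    unfolding F_def by measurable
  have F_norm_measurable: "(\<lambda>y::'a. F (norm y)) \<in> borel_measurable borel"
    by measurable
  have F_nonneg: "0 \<le> F r" for r
    using chi_nonneg by (simp add: F_def)
  have F_support: "\<delta> < norm y \<Longrightarrow> F (norm y) = 0" for y :: 'a
    using chi_support[of "norm y / \<delta>"] \<open>0 < \<delta>\<close> by (simp add: F_def)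
  note moment = cutoff_kernel_second_moment[OF chi_measurable chi_nonneg chi_le_1 chi_support \<open>\<alpha> < 1\<close> \<open>0 < \<delta>\<close>,
      where 'a='a, folded F_def V_def J_def P_def]
  have Q_eq: "Q = (norm \<xi>)\<^sup>2 * V * P * J"
    using integral_radial_inner_square[OF F_measurable moment(1), of \<xi>] moment(2) by (simp add: Q_def)
  have A_lower: "(1/2 - t) * Q \<le> A" and A_upper: "A \<le> Q / 2"
    using integral_one_minus_cos_bounds[OF F_norm_measurable F_nonneg F_support
        integrable_radial_inner_square[OF F_measurable moment(1)]]
    by (simp_all add: A_def Q_def t_def)
  have "0 \<le> A"
    using F_nonneg by (simp add: A_def integral_nonneg_AE)
  have "omega_delta \<kappa> \<alpha> chi \<delta> \<xi> = sqrt (\<kappa> / P * A)"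
    by (simp add: omega_delta_def A_def F_def P_def)
  moreover have "gamma_const TYPE('a) \<kappa> \<alpha> chi * norm \<xi> = sqrt (\<kappa> / P * Q / 2)"
  proof -
    have "\<kappa> / P * Q / 2 = \<kappa> / 2 * V * J * (norm \<xi>)\<^sup>2"
      using \<open>0 < \<delta>\<close> by (simp add: Q_eq P_def)
    then show ?thesis
      unfolding gamma_const_def V_def[symmetric] J_def[symmetric]
      by (simp only: real_sqrt_mult real_sqrt_abs abs_norm_cancel)
  qed
  ultimately have "\<bar>omega_delta \<kappa> \<alpha> chi \<delta> \<xi> - gamma_const TYPE('a) \<kappa> \<alpha> chi * norm \<xi>\<bar>
      \<le> gamma_const TYPE('a) \<kappa> \<alpha> chi * norm \<xi> * sqrt (2 * t)"
    using abs_sqrt_sub_sqrt_le[OF _ _ \<open>0 \<le> A\<close> A_lower A_upper, of "\<kappa> / P"] \<open>0 \<le> \<kappa>\<close>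
    by (simp add: t_def P_def)
  also have "\<dots> \<le> gamma_const TYPE('a) \<kappa> \<alpha> chi * norm \<xi> * (\<delta> * norm \<xi>)"
  proof (rule mult_left_mono)
    have "sqrt (2 * t) \<le> sqrt ((\<delta> * norm \<xi>)\<^sup>2)"
      by (intro real_sqrt_le_mono) (simp add: t_def power_mult_distrib)
    then show "sqrt (2 * t) \<le> \<delta> * norm \<xi>"
      using \<open>0 < \<delta>\<close> by simp
    show "0 \<le> gamma_const TYPE('a) \<kappa> \<alpha> chi * norm \<xi>"
      using gamma_const_nonneg[of \<kappa> chi, OF \<open>0 \<le> \<kappa>\<close> chi_nonneg, where 'a='a] by simp
  qed
  also have "\<dots> = gamma_const TYPE('a) \<kappa> \<alpha> chi * \<delta> * (norm \<xi>)\<^sup>2"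
    by (simp add: power2_eq_square)
  finally show ?thesis .
qed

theorem mainTheorem10:
  fixes \<kappa> \<alpha> :: real and chi :: "real \<Rightarrow> real"
  assumes "0 < \<kappa>" and "0 < \<alpha>" and "\<alpha> < 1"
    and "chi \<in> borel_measurable borel"
    and "\<And>x. 0 \<le> chi x" and "\<And>x. chi x \<le> 1"
    and "\<And>x. \<bar>x\<bar> > 1 \<Longrightarrow> chi x = 0"
    and "\<And>x. \<bar>x\<bar> \<le> 1/2 \<Longrightarrow> chi x = 1"
  shows "\<exists>C>0. \<forall>\<delta>>0. \<forall>\<xi>::'a::euclidean_space.
           \<bar>omega_delta \<kappa> \<alpha> chi \<delta> \<xi> - gamma_const TYPE('a) \<kappa> \<alpha> chi * norm \<xi>\<bar>
             \<le> C * \<delta> * (norm \<xi>)\<^sup>2"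
proof (intro exI[of _ "gamma_const TYPE('a) \<kappa> \<alpha> chi + 1"] conjI allI impI)
  have "0 \<le> gamma_const TYPE('a) \<kappa> \<alpha> chi"
    using gamma_const_nonneg[of \<kappa> chi, OF less_imp_le[OF assms(1)] assms(5)] .
  then show "0 < gamma_const TYPE('a) \<kappa> \<alpha> chi + 1"
    by simp
  fix \<delta> :: real and \<xi> :: 'a
  assume "0 < \<delta>"
  then have "\<bar>omega_delta \<kappa> \<alpha> chi \<delta> \<xi> - gamma_const TYPE('a) \<kappa> \<alpha> chi * norm \<xi>\<bar>
      \<le> gamma_const TYPE('a) \<kappa> \<alpha> chi * \<delta> * (norm \<xi>)\<^sup>2"
    using assms by (intro omega_delta_estimate) auto
  also have "\<dots> \<le> (gamma_const TYPE('a) \<kappa> \<alpha> chi + 1) * \<delta> * (norm \<xi>)\<^sup>2"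
    using \<open>0 < \<delta>\<close> by (intro mult_right_mono) auto
  finally show "\<bar>omega_delta \<kappa> \<alpha> chi \<delta> \<xi> - gamma_const TYPE('a) \<kappa> \<alpha> chi * norm \<xi>\<bar>
      \<le> (gamma_const TYPE('a) \<kappa> \<alpha> chi + 1) * \<delta> * (norm \<xi>)\<^sup>2" .
qed

end
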